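(* Let $\mu$ be a nonvanishing differentiable real function and $\omega^2$ a real function of $t$, and let $r(t)$ be the solution of $$\ddot r+\frac{\dot\mu(t)}{\mu(t)}\dot r+\omega^2(t) r=0,\qquad r(t_0)=r_0\neq 0,\quad \dot r(t_0)=0.$$ Define $$\rho(t)=\mu(t)\frac{\dot r(t)}{r(t)},\qquad \tau(t)=r^2(t_0)\int_{t_0}^{t}\frac{d\xi}{\mu(\xi)r^2(\xi)},\qquad g(t)=-\ln\!\left(\frac{r(t)}{r(t_0)}\right),$$ and the operator $$\hat W(t,t_0)=\exp\!\left(-\frac{\rho(t)}{2}x^2\right)\exp\!\left(g(t)\Big(x\frac{\partial}{\partial x}+\frac12\Big)\right)\exp\!\left(\frac{\tau(t)}{2}\frac{\partial^2}{\partial x^2}\right).$$ Then $\Phi(x,t)=\hat W(t,t_0)\Phi(x,t_0)$ is a formal solution of the initial value problem $$\frac{\partial\Phi}{\partial t}=\frac{1}{2\mu(t)}\frac{\partial^2\Phi}{\partial x^2}+\frac{\mu(t)\omega^2(t)}{2}x^2\Phi,\qquad \Phi(x,t)|_{t=t_0}=\Phi(x,t_0),\quad -\infty<x<\infty.$$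
   Context: Dots denote $t$-derivatives. The exponentials of operators are formal exponential operators (ordered product, Wei–Norman type representation); $g$ is allowed to be complex-valued. "Formal solution" means the operator $\hat W$ formally satisfies $\frac{d}{dt}\hat W=\big(\frac{1}{2\mu}\partial_x^2+\frac{\mu\omega^2}{2}x^2\big)\hat W$, $\hat W(t_0,t_0)=I$. *)

theory Defs
  imports "HOL-Analysis.Analysis" "HOL-Computational_Algebra.Polynomial"
begin

text \<open>The three formal exponential factors of W, acting on (real) polynomial
  initial data, where each of them is a well-defined (finite) operation.\<close>

definition exp_mult_x2 :: "real \<Rightarrow> (real \<Rightarrow> real) \<Rightarrow> (real \<Rightarrow> real)" where
  "exp_mult_x2 c f = (\<lambda>x. exp (c * x\<^sup>2) * f x)"

text \<open>exp(g (x d/dx + 1/2)): dilation operator.\<close>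
definition exp_dilation :: "real \<Rightarrow> (real \<Rightarrow> real) \<Rightarrow> (real \<Rightarrow> real)" where
  "exp_dilation g f = (\<lambda>x. exp (g / 2) * f (exp g * x))"

definition exp_d2 :: "real \<Rightarrow> real poly \<Rightarrow> (real \<Rightarrow> real)" where
  "exp_d2 s p = (\<lambda>x. \<Sum>k\<le>degree p. s ^ k / fact k * poly ((pderiv ^^ (2 * k)) p) x)"

definition W_op :: "real \<Rightarrow> real \<Rightarrow> real \<Rightarrow> real poly \<Rightarrow> (real \<Rightarrow> real)" where
  "W_op \<rho> g \<tau> p = exp_mult_x2 (- \<rho> / 2) (exp_dilation g (exp_d2 (\<tau> / 2) p))"

definition oint :: "(real \<Rightarrow> real) \<Rightarrow> real \<Rightarrow> real \<Rightarrow> real" where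
  "oint f a b = (if a \<le> b then integral {a..b} f else - integral {b..a} f)"

end

theory Submission
  imports Defs
begin

text \<open>Write \<open>W = e^{-\<rho> x\<^sup>2/2} e^{g/2} E(\<tau>/2, e^g x)\<close>, where \<open>E(s, y) = exp(s \<partial>\<^sub>y\<^sup>2) p\<close> solves the
  heat equation \<open>\<partial>\<^sub>s E = \<partial>\<^sub>y\<^sup>2 E\<close>. Differentiating in \<open>t\<close> and using the heat equation, the evolution
  equation for \<open>W\<close> reduces to three ordinary differential equations for the coefficients:
  \<open>\<rho>' = -\<mu>\<omega>\<^sup>2 - \<rho>\<^sup>2/\<mu>\<close>, the Riccati equation into which \<open>\<rho> = \<mu> r'/r\<close> turns the linear equation
  for \<open>r\<close>, together with \<open>g' = -\<rho>/\<mu>\<close> and \<open>\<tau>' = e^{2g}/\<mu>\<close>, which hold by construction.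
  The initial conditions make all three coefficients vanish at \<open>t\<^sub>0\<close>, where \<open>W\<close> is the identity.
  Since \<open>r\<close> does not vanish on the interval, it keeps the sign of \<open>r t\<^sub>0\<close>, so the logarithm
  in \<open>g\<close> is that of a positive number.\<close>

lemma degree_higher_pderiv:
  fixes p :: "'a::{idom, ring_char_0} poly"
  shows "degree ((pderiv ^^ m) p) = degree p - m"
  by (induction m) (simp_all add: degree_pderiv)

lemma higher_pderiv_eq_0:
  fixes p :: "'a::{idom, ring_char_0} poly"
  assumes "degree p < m" shows "(pderiv ^^ m) p = 0"
proof -
  obtain j where m: "m = Suc j" using assms by (cases m) auto
  have "degree ((pderiv ^^ j) p) = 0" using assms m by (simp add: degree_higher_pderiv)
  then show ?thesis using m by (simp add: pderiv_eq_0_iff)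
qed

lemma exp_d2_eq_sum:
  assumes "degree p \<le> n"
  shows "exp_d2 s p x = (\<Sum>k\<le>n. s ^ k / fact k * poly ((pderiv ^^ (2 * k)) p) x)"
  unfolding exp_d2_def
  by (rule sum.mono_neutral_left) (use assms in \<open>auto simp: higher_pderiv_eq_0\<close>)

lemma exp_d2_pderiv:
  "exp_d2 s (pderiv p) x = (\<Sum>k\<le>degree p. s ^ k / fact k * poly ((pderiv ^^ (2 * k + 1)) p) x)"
  using exp_d2_eq_sum[of "pderiv p" "degree p"]
  by (simp add: degree_pderiv funpow_Suc_right del: funpow.simps)

lemma exp_d2_pderiv2:
  "exp_d2 s (pderiv (pderiv p)) x =
     (\<Sum>k\<le>degree p. real k * s ^ (k - 1) / fact k * poly ((pderiv ^^ (2 * k)) p) x)"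
proof (cases "degree p")
  case 0
  then have "pderiv p = 0" by (simp add: pderiv_eq_0_iff)
  then show ?thesis by (simp add: exp_d2_def 0)
next
  case (Suc n)
  have "(\<Sum>k\<le>degree p. real k * s ^ (k - 1) / fact k * poly ((pderiv ^^ (2 * k)) p) x)
      = (\<Sum>k\<le>n. s ^ k / fact k * poly ((pderiv ^^ (2 * k)) (pderiv (pderiv p))) x)"
    unfolding Suc sum.atMost_Suc_shift
    by (simp add: funpow_Suc_right fact_Suc del: funpow.simps of_nat_Suc)
  also have "\<dots> = exp_d2 s (pderiv (pderiv p)) x"
    by (rule exp_d2_eq_sum[symmetric]) (simp add: degree_pderiv Suc)
  finally show ?thesis ..
qed

lemma has_real_derivative_exp_d2:
  assumes "(\<sigma> has_real_derivative \<sigma>') (at t)" and "(\<psi> has_real_derivative \<psi>') (at t)"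
  shows "((\<lambda>u. exp_d2 (\<sigma> u) p (\<psi> u)) has_real_derivative
           exp_d2 (\<sigma> t) (pderiv (pderiv p)) (\<psi> t) * \<sigma>' + exp_d2 (\<sigma> t) (pderiv p) (\<psi> t) * \<psi>')
         (at t)"
proof -
  have "((\<lambda>u. \<sigma> u ^ k / fact k * poly ((pderiv ^^ (2 * k)) p) (\<psi> u)) has_real_derivative
          real k * \<sigma> t ^ (k - 1) / fact k * poly ((pderiv ^^ (2 * k)) p) (\<psi> t) * \<sigma>'
          + \<sigma> t ^ k / fact k * poly ((pderiv ^^ (2 * k + 1)) p) (\<psi> t) * \<psi>') (at t)" for k
  proof -
    have pow: "((\<lambda>u. \<sigma> u ^ k) has_real_derivative real k * \<sigma> t ^ (k - 1) * \<sigma>') (at t)"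
      using DERIV_chain2[OF DERIV_pow assms(1)] by simp
    have poly: "((\<lambda>u. poly ((pderiv ^^ (2 * k)) p) (\<psi> u)) has_real_derivative
        poly ((pderiv ^^ (2 * k + 1)) p) (\<psi> t) * \<psi>') (at t)"
      using DERIV_chain2[OF poly_DERIV assms(2)] by simp
    show ?thesis
      using DERIV_mult[OF DERIV_cdivide[OF pow, of "fact k"] poly] by (simp add: algebra_simps)
  qed
  then have "((\<lambda>u. exp_d2 (\<sigma> u) p (\<psi> u)) has_real_derivative
          (\<Sum>k\<le>degree p. real k * \<sigma> t ^ (k - 1) / fact k * poly ((pderiv ^^ (2 * k)) p) (\<psi> t) * \<sigma>'
          + \<sigma> t ^ k / fact k * poly ((pderiv ^^ (2 * k + 1)) p) (\<psi> t) * \<psi>')) (at t)"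
    unfolding exp_d2_def by (rule DERIV_sum)
  then show ?thesis
    by (rule DERIV_cong, subst exp_d2_pderiv2, subst exp_d2_pderiv)
       (simp add: sum.distrib sum_distrib_right)
qed

lemma W_op_eq: "W_op R G T p x = exp (- R / 2 * x\<^sup>2) * exp (G / 2) * exp_d2 (T / 2) p (exp G * x)"
  by (simp add: W_op_def exp_mult_x2_def exp_dilation_def exp_d2_def)

lemma W_op_0: "W_op 0 0 0 p x = poly p x"
  by (simp add: W_op_eq exp_d2_def sum.atMost_shift)

lemma deriv2_W_op:
  "deriv (deriv (\<lambda>y. W_op R G T p y)) x =
    exp (- R / 2 * x\<^sup>2) * exp (G / 2) *
      ((exp G)\<^sup>2 * exp_d2 (T / 2) (pderiv (pderiv p)) (exp G * x)
       - 2 * R * x * exp G * exp_d2 (T / 2) (pderiv p) (exp G * x)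
       + (R\<^sup>2 * x\<^sup>2 - R) * exp_d2 (T / 2) p (exp G * x))"
proof -
  define W1 where "W1 y = exp (- R / 2 * y\<^sup>2) * exp (G / 2) *
    (exp G * exp_d2 (T / 2) (pderiv p) (exp G * y) - R * y * exp_d2 (T / 2) p (exp G * y))" for y
  have "((\<lambda>y. W_op R G T p y) has_real_derivative W1 y) (at y)" for y
    unfolding W_op_eq W1_def
    by (rule derivative_eq_intros has_real_derivative_exp_d2 refl | simp)+ (simp add: algebra_simps)
  then have "deriv (\<lambda>y. W_op R G T p y) = W1"
    by (simp add: fun_eq_iff DERIV_imp_deriv)
  moreover have "(W1 has_real_derivative exp (- R / 2 * x\<^sup>2) * exp (G / 2) *
      ((exp G)\<^sup>2 * exp_d2 (T / 2) (pderiv (pderiv p)) (exp G * x)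
       - 2 * R * x * exp G * exp_d2 (T / 2) (pderiv p) (exp G * x)
       + (R\<^sup>2 * x\<^sup>2 - R) * exp_d2 (T / 2) p (exp G * x))) (at x)"
    unfolding W1_def
    by (rule derivative_eq_intros has_real_derivative_exp_d2 refl | simp)+
       (simp add: algebra_simps power2_eq_square)
  ultimately show ?thesis by (simp add: DERIV_imp_deriv)
qed

lemma has_real_derivative_W_op:
  assumes \<rho>: "(\<rho> has_real_derivative - m * w - (\<rho> t)\<^sup>2 / m) (at t)"
    and g: "(g has_real_derivative - \<rho> t / m) (at t)"
    and \<tau>: "(\<tau> has_real_derivative exp (2 * g t) / m) (at t)"
    and m: "m \<noteq> 0"
  shows "((\<lambda>s. W_op (\<rho> s) (g s) (\<tau> s) p x) has_real_derivative
           1 / (2 * m) * deriv (deriv (\<lambda>y. W_op (\<rho> t) (g t) (\<tau> t) p y)) x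
           + m * w / 2 * x\<^sup>2 * W_op (\<rho> t) (g t) (\<tau> t) p x) (at t)"
proof -
  define R a s where "R = \<rho> t" and "a = exp (g t)" and "s = \<tau> t / 2"
  define E where "E q = exp_d2 s q (a * x)" for q
  have "exp (2 * g t) = a\<^sup>2"
    by (simp add: a_def power2_eq_square flip: exp_add)
  with \<tau> have \<tau>': "(\<tau> has_real_derivative a\<^sup>2 / m) (at t)" by simp
  have "((\<lambda>s. W_op (\<rho> s) (g s) (\<tau> s) p x) has_real_derivative
      exp (- R / 2 * x\<^sup>2) * exp (g t / 2) *
        ((m * w + R\<^sup>2 / m) / 2 * x\<^sup>2 * E p - R / (2 * m) * E p
         + a\<^sup>2 / (2 * m) * E (pderiv (pderiv p)) - R / m * a * x * E (pderiv p))) (at t)"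
    unfolding W_op_eq
    by (rule DERIV_cong, (rule derivative_eq_intros has_real_derivative_exp_d2 \<rho> g \<tau>' refl | simp)+)
       (simp add: R_def a_def s_def E_def algebra_simps)
  moreover have "exp (- R / 2 * x\<^sup>2) * exp (g t / 2) *
        ((m * w + R\<^sup>2 / m) / 2 * x\<^sup>2 * E p - R / (2 * m) * E p
         + a\<^sup>2 / (2 * m) * E (pderiv (pderiv p)) - R / m * a * x * E (pderiv p))
      = 1 / (2 * m) * deriv (deriv (\<lambda>y. W_op (\<rho> t) (g t) (\<tau> t) p y)) x
           + m * w / 2 * x\<^sup>2 * W_op (\<rho> t) (g t) (\<tau> t) p x"
    unfolding deriv2_W_op unfolding W_op_eq using m
    by (simp add: R_def a_def s_def E_def field_simps power2_eq_square)
  ultimately show ?thesis by simp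
qed

lemma continuous_on_interval_nonzero_same_sign:
  fixes f :: "real \<Rightarrow> real"
  assumes "is_interval I" and "continuous_on I f" and "\<And>t. t \<in> I \<Longrightarrow> f t \<noteq> 0"
    and "a \<in> I" and "b \<in> I"
  shows "f a * f b > 0"
proof (rule ccontr)
  assume "\<not> f a * f b > 0"
  then have "min (f a) (f b) \<le> 0" "0 \<le> max (f a) (f b)"
    by (auto simp: zero_less_mult_iff min_def max_def not_less)
  moreover have "is_interval (f ` I)"
    using assms(1,2) by (simp add: is_interval_connected_1 connected_continuous_image)
  ultimately have "0 \<in> f ` I"
    using assms(4,5) unfolding is_interval_1 min_def max_def
    by (smt (verit, best) image_eqI)
  then show False using assms(3) by auto
qed

lemma oint_eq_integral_diff:
  assumes "f integrable_on {a..b}" and "t0 \<in> {a..b}" and "s \<in> {a..b}"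
  shows "oint f t0 s = integral {a..s} f - integral {a..t0} f"
proof (cases "t0 \<le> s")
  case True
  have "integral {a..t0} f + integral {t0..s} f = integral {a..s} f"
    using True assms
    by (intro Henstock_Kurzweil_Integration.integral_combine integrable_subinterval_real[OF assms(1)]) auto
  then show ?thesis using True by (simp add: oint_def)
next
  case False
  have "integral {a..s} f + integral {s..t0} f = integral {a..t0} f"
    using False assms
    by (intro Henstock_Kurzweil_Integration.integral_combine integrable_subinterval_real[OF assms(1)]) auto
  then show ?thesis using False by (simp add: oint_def)
qed

lemma open_real_bracket:
  fixes S :: "real set"
  assumes "open S" and "x \<in> S"
  obtains a b where "a \<in> S" "b \<in> S" "a < x" "x < b"
proof -
  obtain e where "e > 0" "ball x e \<subseteq> S" using assms open_contains_ball by blast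
  then show ?thesis by (intro that[of "x - e / 2" "x + e / 2"]) (auto simp: dist_real_def)
qed

lemma has_real_derivative_oint:
  fixes f :: "real \<Rightarrow> real"
  assumes I: "is_interval I" "open I" and "t0 \<in> I" "t \<in> I" and f: "continuous_on I f"
  shows "((\<lambda>s. oint f t0 s) has_real_derivative f t) (at t)"
proof -
  have "min t0 t \<in> I" "max t0 t \<in> I" using assms by (auto simp: min_def max_def)
  then obtain a b where ab: "a \<in> I" "b \<in> I" "a < min t0 t" "max t0 t < b"
    using open_real_bracket[OF I(2)] by (metis order.strict_trans)
  then have "{a..b} \<subseteq> I"
    using I(1) unfolding is_interval_1 by (meson atLeastAtMost_iff subsetI)
  then have f_ab: "continuous_on {a..b} f" using f continuous_on_subset by blast
  have "((\<lambda>s. integral {a..s} f) has_real_derivative f t) (at t within {a..b})"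
    by (rule integral_has_real_derivative[OF f_ab]) (use ab in auto)
  then have "((\<lambda>s. integral {a..s} f) has_real_derivative f t) (at t within {a<..<b})"
    by (rule DERIV_subset) auto
  then have "((\<lambda>s. integral {a..s} f - integral {a..t0} f) has_real_derivative f t) (at t)"
    using ab at_within_open[of t "{a<..<b}"] by (auto intro: derivative_eq_intros)
  then show ?thesis
    using ab integrable_continuous_real[OF f_ab]
    by (rule_tac has_field_derivative_transform_within_open[where S="{a<..<b}"])
       (auto simp: oint_eq_integral_diff)
qed

lemma has_real_derivative_riccati:
  fixes \<mu> r r' :: "real \<Rightarrow> real"
  assumes "(\<mu> has_real_derivative \<mu>') (at t)" and "(r has_real_derivative r' t) (at t)"
    and "(r' has_real_derivative r'') (at t)"
    and ode: "r'' + \<mu>' / \<mu> t * r' t + w * r t = 0"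
    and "\<mu> t \<noteq> 0" and "r t \<noteq> 0"
  shows "((\<lambda>s. \<mu> s * r' s / r s) has_real_derivative - \<mu> t * w - (\<mu> t * r' t / r t)\<^sup>2 / \<mu> t) (at t)"
proof -
  have "((\<lambda>s. \<mu> s * r' s / r s) has_real_derivative
      ((\<mu>' * r' t + \<mu> t * r'') * r t - \<mu> t * r' t * r' t) / (r t)\<^sup>2) (at t)"
    using assms by (auto intro!: derivative_eq_intros simp: power2_eq_square)
  moreover have "r'' = - \<mu>' / \<mu> t * r' t - w * r t" using ode by simp
  ultimately show ?thesis using assms(5,6)
    by (simp add: field_simps power2_eq_square)
qed

theorem proposition2:
  fixes \<mu> \<mu>' \<omega>2 r r' r'' :: "real \<Rightarrow> real" and I :: "real set" and t0 :: real
    and p :: "real poly"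
  assumes I: "is_interval I" "open I" "t0 \<in> I"
    and mu_der: "\<And>t. t \<in> I \<Longrightarrow> (\<mu> has_real_derivative \<mu>' t) (at t)"
    and mu_nz: "\<And>t. t \<in> I \<Longrightarrow> \<mu> t \<noteq> 0"
    and r_der: "\<And>t. t \<in> I \<Longrightarrow> (r has_real_derivative r' t) (at t)"
    and r'_der: "\<And>t. t \<in> I \<Longrightarrow> (r' has_real_derivative r'' t) (at t)"
    and ode: "\<And>t. t \<in> I \<Longrightarrow> r'' t + \<mu>' t / \<mu> t * r' t + \<omega>2 t * r t = 0"
    and init: "r t0 \<noteq> 0" "r' t0 = 0"
    and r_nz: "\<And>t. t \<in> I \<Longrightarrow> r t \<noteq> 0"
  defines "\<rho> \<equiv> (\<lambda>t. \<mu> t * r' t / r t)"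
    and "\<tau> \<equiv> (\<lambda>t. (r t0)\<^sup>2 * oint (\<lambda>\<xi>. 1 / (\<mu> \<xi> * (r \<xi>)\<^sup>2)) t0 t)"
    and "g \<equiv> (\<lambda>t. - ln (r t / r t0))"
  shows "let \<Phi> = (\<lambda>x t. W_op (\<rho> t) (g t) (\<tau> t) p x) in
         (\<forall>x. \<Phi> x t0 = poly p x) \<and>
         (\<forall>t\<in>I. \<forall>x.
            ((\<lambda>s. \<Phi> x s) has_real_derivative
               (1 / (2 * \<mu> t) * deriv (deriv (\<lambda>y. \<Phi> y t)) x
                + \<mu> t * \<omega>2 t / 2 * x\<^sup>2 * \<Phi> x t)) (at t))"
proof -
  have r_cont: "continuous_on I r" and \<mu>_cont: "continuous_on I \<mu>"
    using r_der mu_der by (meson DERIV_isCont continuous_at_imp_continuous_on)+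
  have f_cont: "continuous_on I (\<lambda>\<xi>. 1 / (\<mu> \<xi> * (r \<xi>)\<^sup>2))"
    using mu_nz r_nz by (intro continuous_intros r_cont \<mu>_cont) auto
  have ratio_pos: "r t / r t0 > 0" if "t \<in> I" for t
    using continuous_on_interval_nonzero_same_sign[OF I(1) r_cont r_nz that I(3)]
    by (simp add: zero_less_divide_iff zero_less_mult_iff)
  have "W_op (\<rho> t0) (g t0) (\<tau> t0) p x = poly p x" for x
    using init by (simp add: \<rho>_def g_def \<tau>_def oint_def W_op_0)
  moreover have "((\<lambda>s. W_op (\<rho> s) (g s) (\<tau> s) p x) has_real_derivative
      1 / (2 * \<mu> t) * deriv (deriv (\<lambda>y. W_op (\<rho> t) (g t) (\<tau> t) p y)) x
      + \<mu> t * \<omega>2 t / 2 * x\<^sup>2 * W_op (\<rho> t) (g t) (\<tau> t) p x) (at t)" if t: "t \<in> I" for t x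
  proof (rule has_real_derivative_W_op)
    show "(\<rho> has_real_derivative - \<mu> t * \<omega>2 t - (\<rho> t)\<^sup>2 / \<mu> t) (at t)"
      unfolding \<rho>_def
      using has_real_derivative_riccati[OF mu_der r_der r'_der ode mu_nz r_nz, OF t t t t t t] .
    have "(g has_real_derivative - (r' t / r t0) / (r t / r t0)) (at t)"
      unfolding g_def using ratio_pos[OF t]
      by (auto intro!: derivative_eq_intros r_der t)
    then show "(g has_real_derivative - \<rho> t / \<mu> t) (at t)"
      using init mu_nz[OF t] r_nz[OF t] by (simp add: \<rho>_def)
    have "exp (g t) = r t0 / r t"
      using ratio_pos[OF t] by (simp add: g_def exp_minus exp_ln)
    then have "exp (2 * g t) = (r t0 / r t)\<^sup>2"
      by (metis exp_add mult_2 power2_eq_square)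
    then show "(\<tau> has_real_derivative exp (2 * g t) / \<mu> t) (at t)"
      unfolding \<tau>_def using has_real_derivative_oint[OF I(1,2,3) t f_cont]
      by (auto intro!: derivative_eq_intros simp: field_simps power2_eq_square)
    show "\<mu> t \<noteq> 0" using mu_nz t .
  qed
  ultimately show ?thesis by (simp add: Let_def)
qed

end
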